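(* Let $\theta\in\mathcal{N}$ be bounded. For $n\ge1$ put $e^\theta_n=[\lambda(n-1;\theta),\lambda(n;\theta)]$ (with $\lambda(0;\theta)=*$). Then $P^\theta(\{(e^\theta_n)_{n=1}^\infty\})>0$ and \[P^\theta\Big(\bigcup_{\gamma\in\mathfrak{S}}\{\gamma((e^\theta_n)_{n=1}^\infty)\}\Big)=1.\]
   Context: Fix $q\in(0,1)$. Gelfand--Tsetlin graph: for $N\ge1$ let $\mathrm{Sign}_N=\{\lambda\in\mathbb{Z}^N\mid \lambda_1\ge\cdots\ge\lambda_N\}$, $\mathrm{Sign}_0=\{*\}$, $|\lambda|=\lambda_1+\cdots+\lambda_N$. For $\mu\in\mathrm{Sign}_{N-1}$, $\lambda\in\mathrm{Sign}_N$ write $\mu\prec\lambda$ if $\lambda_1\ge\mu_1\ge\lambda_2\ge\cdots\ge\mu_{N-1}\ge\lambda_N$ (with $*\prec\lambda$ for all $\lambda\in\mathrm{Sign}_1$). Edges of level $N$ are pairs $[\mu,\lambda]$ with $\mu\prec\lambda$, source $\mu$, range $\lambda$; a path is a sequence of edges with the range of each equal to the source of the next. Weight $w([\mu,\lambda])=q^{N|\mu|-(N-1)|\lambda|}$ for a level-$N$ edge, multiplicative along paths. For $\mu\in\mathrm{Sign}_K,\lambda\in\mathrm{Sign}_N$, $K<N$: $\dim_q(\mu,\lambda)=\sum_\alpha w(\alpha)$ over finite paths $\alpha$ from $\mu$ to $\lambda$; $\dim_q(\lambda)=\dim_q( *,\lambda)$. $\Omega$: infinite paths from $*$; $C_\alpha$: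 infinite paths beginning with the finite path $\alpha$; $\mathcal{C}$: $\sigma$-algebra generated by the $C_\alpha$. $P$ is $q$-central if $P(C_\alpha)/w(\alpha)=P(\{\omega\mid r(\omega_N)=\lambda\})/\dim_q(\lambda)$ for all $\lambda\in\mathrm{Sign}_N$ and paths $\alpha$ from $*$ to $\lambda$. For $\lambda\in\mathrm{Sign}_N$, each permutation $\gamma_0$ of the finite paths from $*$ to $\lambda$ acts on $\Omega$ by replacing the initial segment $(\omega_1,\dots,\omega_N)$ by its image under $\gamma_0$ when $\omega_N$ ends at $\lambda$ and fixing other $\omega$; $\mathfrak{S}_N$ is generated by these for all $\lambda\in\mathrm{Sign}_N$, $\mathfrak{S}=\bigcup_N\mathfrak{S}_N$. Let $\mathcal{N}=\{\theta\in\mathbb{Z}^\infty\mid\theta_1\le\theta_2\le\cdots\}$ and $\lambda(n;\theta)=(\theta_n,\dots,\theta_1)\in\mathrm{Sign}_n$. (Known fact:) for each $\theta\in\mathcal{N}$ there is a unique $q$-central probability measure $P^\theta$ with $P^\theta(C_\alpha)/\dim_q(\lambda)=\lim_{n\to\infty}\dim_q(\lambda,\lambda(n;\theta))/\dim_q(\lambda(n;\theta))$ for every finite path $\alpha$ from $*$ to $\lambda\in\mathrm{Sign}_N$; the $P^\theta$ are exactly the extreme, equivalently $\mathfrak{S}$-ergodic, $q$-central probability measures. *)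

theory Defs
  imports "HOL-Probability.Probability"
begin

text \<open>Signatures of length N are non-increasing integer lists of length N;
  the empty list plays the role of the unique element of Sign_0.\<close>
definition sign :: "nat \<Rightarrow> int list set" where
  "sign N = {l. length l = N \<and> sorted_wrt (\<lambda>x y. x \<ge> y) l}"

definition prec :: "int list \<Rightarrow> int list \<Rightarrow> bool" where
  "prec mu la \<longleftrightarrow> length la = Suc (length mu) \<and>
     (\<forall>i<length mu. la ! i \<ge> mu ! i \<and> mu ! i \<ge> la ! Suc i)"

type_synonym edge = "int list \<times> int list"

text \<open>An edge [mu, la]: source fst, range snd; its level is length la.\<close>
definition is_edge :: "edge \<Rightarrow> bool" where
  "is_edge e \<longleftrightarrow> fst e \<in> sign (length (fst e)) \<and> snd e \<in> sign (length (snd e))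
     \<and> prec (fst e) (snd e)"

definition wt :: "real \<Rightarrow> edge \<Rightarrow> real" where
  "wt q e = (let N = int (length (snd e)) in
     q powi (N * sum_list (fst e) - (N - 1) * sum_list (snd e)))"

definition path_wt :: "real \<Rightarrow> edge list \<Rightarrow> real" where
  "path_wt q al = prod_list (map (wt q) al)"

definition fpaths :: "int list \<Rightarrow> int list \<Rightarrow> edge list set" where
  "fpaths mu la = {al. al \<noteq> [] \<and> (\<forall>e\<in>set al. is_edge e) \<and> fst (hd al) = mu \<and>
     snd (last al) = la \<and> (\<forall>i. Suc i < length al \<longrightarrow> snd (al ! i) = fst (al ! Suc i))}"

definition dimq :: "real \<Rightarrow> int list \<Rightarrow> int list \<Rightarrow> real" where
  "dimq q mu la = (\<Sum>al\<in>fpaths mu la. path_wt q al)"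

definition dimq1 :: "real \<Rightarrow> int list \<Rightarrow> real" where
  "dimq1 q la = dimq q [] la"

text \<open>Infinite paths from *: omega n is the edge of level n+1 (i.e. omega_{n+1}).\<close>
definition Omega :: "(nat \<Rightarrow> edge) set" where
  "Omega = {om. (\<forall>n. is_edge (om n)) \<and> fst (om 0) = [] \<and>
     (\<forall>n. snd (om n) = fst (om (Suc n)))}"

definition cyl :: "edge list \<Rightarrow> (nat \<Rightarrow> edge) set" where
  "cyl al = {om \<in> Omega. \<forall>i<length al. om i = al ! i}"

definition GT_space :: "(nat \<Rightarrow> edge) measure" where
  "GT_space = sigma Omega {cyl al | al la. al \<in> fpaths [] la}"

definition ends :: "nat \<Rightarrow> int list \<Rightarrow> (nat \<Rightarrow> edge) set" where
  "ends N la = {om \<in> Omega. snd (om (N - 1)) = la}"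

definition q_central :: "real \<Rightarrow> (nat \<Rightarrow> edge) measure \<Rightarrow> bool" where
  "q_central q P \<longleftrightarrow> (\<forall>N\<ge>1. \<forall>la\<in>sign N. \<forall>al\<in>fpaths [] la.
     measure P (cyl al) / path_wt q al = measure P (ends N la) / dimq1 q la)"

text \<open>theta k stands for theta_{k+1}; lam theta n = (theta_n, ..., theta_1).\<close>
definition lam :: "(nat \<Rightarrow> int) \<Rightarrow> nat \<Rightarrow> int list" where
  "lam theta n = rev (map theta [0..<n])"

definition is_P_theta :: "real \<Rightarrow> (nat \<Rightarrow> int) \<Rightarrow> (nat \<Rightarrow> edge) measure \<Rightarrow> bool" where
  "is_P_theta q theta P \<longleftrightarrow> prob_space P \<and> sets P = sets GT_space \<and> q_central q P \<and>
     (\<forall>N\<ge>1. \<forall>la\<in>sign N.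
        (\<lambda>n. dimq q la (lam theta n) / dimq1 q (lam theta n))
          \<longlonglongrightarrow> measure P (ends N la) / dimq1 q la)"

definition epath :: "(nat \<Rightarrow> int) \<Rightarrow> nat \<Rightarrow> edge" where
  "epath theta k = (lam theta k, lam theta (Suc k))"

definition gen :: "nat \<Rightarrow> int list \<Rightarrow> (edge list \<Rightarrow> edge list) \<Rightarrow> (nat \<Rightarrow> edge) \<Rightarrow> (nat \<Rightarrow> edge)" where
  "gen N la g0 om = (if map om [0..<N] \<in> fpaths [] la
     then (\<lambda>i. if i < N then g0 (map om [0..<N]) ! i else om i) else om)"

text \<open>S_N: the group generated by the elementary transformations of level N (each is a
  bijection whose inverse is again elementary, so finite compositions suffice).\<close>
inductive_set SymN :: "nat \<Rightarrow> ((nat \<Rightarrow> edge) \<Rightarrow> (nat \<Rightarrow> edge)) set" for N where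
  SymN_id: "id \<in> SymN N"
| SymN_gen: "\<lbrakk>f \<in> SymN N; la \<in> sign N; bij_betw g0 (fpaths [] la) (fpaths [] la)\<rbrakk>
     \<Longrightarrow> gen N la g0 \<circ> f \<in> SymN N"

definition Sym :: "((nat \<Rightarrow> edge) \<Rightarrow> (nat \<Rightarrow> edge)) set" where
  "Sym = (\<Union>N. SymN N)"

end

(*
  Since theta is monotone and bounded it is eventually constant: theta j = c for j >= K.
  The distinguished path e = (e_n) has the largest weight among the paths to lam n, and the key
  estimate is that dim_q (lam n) is at most a constant times the weight of e_1 ... e_n.  Going
  down a path into lam n at levels >= K, the excess |mu| - |lam m| of the vertices never
  decreases, and it increases whenever the path leaves e; this costs a factor q^(m - K) at
  level m, so the number of paths is compensated by a convergent product.
  Hence r n = dim_q (lam n) / w (e_1 ... e_n) has a finite supremum L.  By q-centrality and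
  the limit formula defining P^theta, P (C (e_1 ... e_M)) >= 1 / L for all M, so P {e} >= 1 / L.
  Replacing e_1 ... e_n by any path to lam n stays in the S-orbit of e and rescales the mass by
  the ratio of weights, so the orbit has mass at least r n * P {e} >= r n / L for every n,
  i.e. mass 1.
*)

theory Submission
  imports Defs
begin

lemma Nil_notin_fpaths [simp]: "[] \<notin> fpaths mu la"
  by (simp add: fpaths_def)

lemma length_edge: "is_edge e \<Longrightarrow> length (snd e) = Suc (length (fst e))"
  by (simp add: is_edge_def prec_def)

lemma fpaths_single_iff: "[e] \<in> fpaths mu la \<longleftrightarrow> is_edge e \<and> fst e = mu \<and> snd e = la"
  by (auto simp: fpaths_def)

lemma fpaths_snoc_iff:
  "al @ [e] \<in> fpaths mu la \<longleftrightarrow> is_edge e \<and> snd e = la \<and>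
     ((al = [] \<and> fst e = mu) \<or> al \<in> fpaths mu (fst e))"
proof (cases "al = []")
  case True
  then show ?thesis by (auto simp: fpaths_def)
next
  case False
  have chain_snoc: "(\<forall>i. Suc i < length (al @ [e]) \<longrightarrow> snd ((al @ [e]) ! i) = fst ((al @ [e]) ! Suc i)) \<longleftrightarrow>
      (\<forall>i. Suc i < length al \<longrightarrow> snd (al ! i) = fst (al ! Suc i)) \<and> snd (last al) = fst e"
    (is "?chain \<longleftrightarrow> _")
  proof
    assume ?chain
    moreover have "snd (last al) = snd ((al @ [e]) ! (length al - 1))" "e = (al @ [e]) ! Suc (length al - 1)"
      using False by (simp_all add: nth_append last_conv_nth)
    ultimately show "(\<forall>i. Suc i < length al \<longrightarrow> snd (al ! i) = fst (al ! Suc i)) \<and> snd (last al) = fst e"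
      using False by (auto simp: nth_append)
  next
    assume "(\<forall>i. Suc i < length al \<longrightarrow> snd (al ! i) = fst (al ! Suc i)) \<and> snd (last al) = fst e"
    then show ?chain
      using False by (auto simp: nth_append last_conv_nth less_Suc_eq) (metis One_nat_def diff_Suc_1)
  qed
  show ?thesis
    using False unfolding fpaths_def mem_Collect_eq chain_snoc by auto
qed

lemma length_fpaths: "al \<in> fpaths mu la \<Longrightarrow> length la = length mu + length al"
  by (induction al arbitrary: la rule: rev_induct) (auto simp: fpaths_snoc_iff dest: length_edge)

lemma fpaths_append: "al \<in> fpaths mu nu \<Longrightarrow> be \<in> fpaths nu la \<Longrightarrow> al @ be \<in> fpaths mu la"
  by (induction be arbitrary: la rule: rev_induct) (auto simp: fpaths_snoc_iff simp flip: append_assoc)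

lemma fpaths_last_step:
  "fpaths mu la = (if is_edge (mu, la) then {[(mu, la)]} else {}) \<union>
     (\<Union>nu\<in>{nu. is_edge (nu, la)}. (\<lambda>al. al @ [(nu, la)]) ` fpaths mu nu)"
proof (intro equalityI subsetI)
  fix al assume "al \<in> fpaths mu la"
  moreover obtain be e where "al = be @ [e]"
    using \<open>al \<in> fpaths mu la\<close> by (metis Nil_notin_fpaths rev_exhaust)
  ultimately show "al \<in> (if is_edge (mu, la) then {[(mu, la)]} else {}) \<union>
     (\<Union>nu\<in>{nu. is_edge (nu, la)}. (\<lambda>al. al @ [(nu, la)]) ` fpaths mu nu)"
    by (cases e) (auto simp: fpaths_snoc_iff)
qed (auto simp: fpaths_snoc_iff fpaths_single_iff split: if_splits)

lemma prec_Cons_Cons_iff: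
  "prec mu (a # b # l) \<longleftrightarrow> (\<exists>x m. mu = x # m \<and> b \<le> x \<and> x \<le> a \<and> prec m (b # l))"
proof
  assume "prec mu (a # b # l)"
  moreover obtain x m where "mu = x # m"
    using \<open>prec mu (a # b # l)\<close> by (cases mu) (auto simp: prec_def)
  ultimately show "\<exists>x m. mu = x # m \<and> b \<le> x \<and> x \<le> a \<and> prec m (b # l)"
    unfolding prec_def by (force simp: All_less_Suc2)
next
  assume "\<exists>x m. mu = x # m \<and> b \<le> x \<and> x \<le> a \<and> prec m (b # l)"
  then obtain x m where "mu = x # m" "b \<le> x" "x \<le> a" "prec m (b # l)"
    by blast
  then show "prec mu (a # b # l)"
    by (simp add: prec_def All_less_Suc2)
qed

lemma prec_set_Cons_Cons:
  "{mu. prec mu (a # b # l)} = (\<lambda>(x, m). x # m) ` ({b..a} \<times> {m. prec m (b # l)})"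
  by (auto simp: prec_Cons_Cons_iff image_iff)

text \<open>The i-th entry of mu ranges over la ! Suc i .. la ! i, and a product of interval lengths
  is at most 2 to the power of their sum.\<close>
lemma finite_card_prec:
  "finite {mu. prec mu (a # l)} \<and>
   (sorted_wrt (\<ge>) (a # l) \<longrightarrow> card {mu. prec mu (a # l)} \<le> 2 ^ nat (a - last (a # l)))"
proof (induction l arbitrary: a)
  case Nil
  have "{mu. prec mu [a]} = {[]}"
    by (auto simp: prec_def)
  then show ?case by simp
next
  case (Cons b l)
  have "card {mu. prec mu (a # b # l)} \<le> 2 ^ nat (a - last (a # b # l))"
    if sorted: "sorted_wrt (\<ge>) (a # b # l)"
  proof -
    have "b \<le> a" "last (b # l) \<le> b"
      using sorted by (auto simp: last_in_set)
    have "card {mu. prec mu (a # b # l)} \<le> nat (a - b + 1) * card {m. prec m (b # l)}"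
      unfolding prec_set_Cons_Cons
      by (metis card_cartesian_product card_atLeastAtMost_int card_image_le Cons.IH finite_SigmaI
          finite_atLeastAtMost_int)
    also have "\<dots> \<le> 2 ^ nat (a - b) * 2 ^ nat (b - last (b # l))"
    proof (rule mult_mono)
      have "nat (a - b + 1) = Suc (nat (a - b))"
        using \<open>b \<le> a\<close> by simp
      then show "nat (a - b + 1) \<le> 2 ^ nat (a - b)"
        by (simp add: Suc_leI)
      show "card {m. prec m (b # l)} \<le> 2 ^ nat (b - last (b # l))"
        using Cons.IH sorted by simp
    qed auto
    also have "\<dots> = 2 ^ nat (a - last (a # b # l))"
      using \<open>b \<le> a\<close> \<open>last (b # l) \<le> b\<close> by (simp flip: power_add nat_add_distrib)
    finally show ?thesis .
  qed
  moreover have "finite {mu. prec mu (a # b # l)}"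
    using Cons.IH by (simp add: prec_set_Cons_Cons)
  ultimately show ?case by blast
qed

lemma finite_edges_to: "finite {mu. is_edge (mu, la)}"
proof (cases la)
  case (Cons a l)
  then show ?thesis
    using finite_card_prec[of a l] by (auto simp: is_edge_def elim: finite_subset[rotated])
qed (simp add: is_edge_def prec_def)

lemma finite_fpaths: "finite (fpaths mu la)"
proof (induction "length la" arbitrary: la rule: less_induct)
  case less
  have "finite (fpaths mu nu)" if "is_edge (nu, la)" for nu
    using less length_edge[OF that] by simp
  then show ?case
    by (subst fpaths_last_step) (simp add: finite_edges_to)
qed

lemma dimq_last_step:
  "dimq q mu la = (if is_edge (mu, la) then wt q (mu, la) else 0) +
     (\<Sum>nu\<in>{nu. is_edge (nu, la)}. dimq q mu nu * wt q (nu, la))"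
proof -
  let ?last = "\<lambda>nu. (\<lambda>al. al @ [(nu, la)]) ` fpaths mu nu"
  have "dimq q mu la = sum (path_wt q) (if is_edge (mu, la) then {[(mu, la)]} else {}) +
      sum (path_wt q) (\<Union>nu\<in>{nu. is_edge (nu, la)}. ?last nu)"
    unfolding dimq_def
    by (subst fpaths_last_step, rule sum.union_disjoint) (auto simp: finite_edges_to finite_fpaths)
  also have "sum (path_wt q) (\<Union>nu\<in>{nu. is_edge (nu, la)}. ?last nu) =
      (\<Sum>nu\<in>{nu. is_edge (nu, la)}. sum (path_wt q) (?last nu))"
    by (rule sum.UNION_disjoint) (auto simp: finite_edges_to finite_fpaths)
  moreover have "sum (path_wt q) (?last nu) = dimq q mu nu * wt q (nu, la)" for nu
    by (subst sum.reindex) (auto simp: inj_on_def dimq_def path_wt_def sum_distrib_right)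
  ultimately show ?thesis
    by (simp add: path_wt_def)
qed

lemma path_wt_append [simp]: "path_wt q (al @ be) = path_wt q al * path_wt q be"
  by (simp add: path_wt_def)

lemma path_wt_pos: "0 < q \<Longrightarrow> 0 < path_wt q al"
  by (induction al) (simp_all add: path_wt_def wt_def Let_def)

lemma path_wt_le_dimq: "0 < q \<Longrightarrow> al \<in> fpaths mu la \<Longrightarrow> path_wt q al \<le> dimq q mu la"
  unfolding dimq_def
  by (rule member_le_sum) (auto simp: finite_fpaths less_imp_le path_wt_pos)

lemma dimq_nonneg: "0 < q \<Longrightarrow> 0 \<le> dimq q mu la"
  unfolding dimq_def by (simp add: sum_nonneg less_imp_le path_wt_pos)

lemma sign_of_fpaths_from_Nil:
  assumes "al \<in> fpaths [] la"
  shows "la \<in> sign (length al)"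
proof -
  have "is_edge (last al)" "snd (last al) = la"
    using assms last_in_set[of al] by (auto simp: fpaths_def)
  then show ?thesis
    using length_fpaths[OF assms] by (simp add: is_edge_def)
qed

lemma Omega_fst_Suc: "om \<in> Omega \<Longrightarrow> fst (om (Suc n)) = snd (om n)"
  by (simp add: Omega_def)

lemma Omega_segment_fpaths:
  assumes "om \<in> Omega" "N < M"
  shows "map om [N..<M] \<in> fpaths (fst (om N)) (snd (om (M - 1)))"
  using assms(2)
proof (induction M)
  case (Suc M)
  show ?case
  proof (cases "N = M")
    case True
    then show ?thesis
      using assms(1) by (simp add: fpaths_single_iff Omega_def)
  next
    case False
    then have "N < M"
      using Suc by simp
    then have "snd (om (M - 1)) = fst (om M)"
      using Omega_fst_Suc[OF assms(1), of "M - 1"] by simp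
    then show ?thesis
      using Suc.IH[OF \<open>N < M\<close>] assms(1) \<open>N < M\<close> by (simp add: fpaths_snoc_iff Omega_def)
  qed
qed simp

lemma Omega_prefix_fpaths:
  "om \<in> Omega \<Longrightarrow> 0 < N \<Longrightarrow> map om [0..<N] \<in> fpaths [] (snd (om (N - 1)))"
  using Omega_segment_fpaths[of om 0 N] by (simp add: Omega_def)

definition replace_prefix :: "edge list \<Rightarrow> (nat \<Rightarrow> edge) \<Rightarrow> nat \<Rightarrow> edge" where
  "replace_prefix al om i = (if i < length al then al ! i else om i)"

lemma snd_prefix_fpaths: "map om [0..<N] \<in> fpaths mu la \<Longrightarrow> snd (om (N - 1)) = la"
  by (cases N) (auto simp: fpaths_def)

lemma map_replace_prefix:
  "length al \<le> M \<Longrightarrow> map (replace_prefix al om) [0..<M] = al @ map om [length al..<M]"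
  by (intro nth_equalityI) (auto simp: replace_prefix_def nth_append)

lemma replace_prefix_in_Omega:
  assumes al: "al \<in> fpaths [] la" and om: "om \<in> Omega" "map om [0..<length al] \<in> fpaths [] la"
  shows "replace_prefix al om \<in> Omega"
proof -
  have "al \<noteq> []"
    using al by auto
  have "snd (om (length al - 1)) = la"
    by (rule snd_prefix_fpaths[OF om(2)])
  have "snd (replace_prefix al om n) = fst (replace_prefix al om (Suc n))" for n
  proof -
    consider "Suc n < length al" | "Suc n = length al" | "length al < Suc n"
      by linarith
    then show ?thesis
    proof cases
      case 2
      then have "n = length al - 1"
        by simp
      then have "snd (al ! n) = la"
        using al \<open>al \<noteq> []\<close> by (simp add: fpaths_def last_conv_nth)
      then show ?thesis
        using 2 om(1) \<open>snd (om (length al - 1)) = la\<close> \<open>n = length al - 1\<close>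
        by (simp add: replace_prefix_def Omega_def)
    qed (use al om(1) in \<open>auto simp: replace_prefix_def fpaths_def Omega_def\<close>)
  qed
  moreover have "is_edge (replace_prefix al om n)" for n
    using al om(1) by (auto simp: replace_prefix_def fpaths_def Omega_def)
  moreover have "fst (replace_prefix al om 0) = []"
    using al \<open>al \<noteq> []\<close> by (auto simp: replace_prefix_def fpaths_def hd_conv_nth)
  ultimately show ?thesis
    by (simp add: Omega_def)
qed

lemma lam_Suc: "lam theta (Suc M) = theta M # lam theta M"
  by (simp add: lam_def)

lemma length_lam [simp]: "length (lam theta M) = M"
  by (simp add: lam_def)

lemma lam_in_sign: "mono theta \<Longrightarrow> lam theta M \<in> sign M"
  unfolding mono_def
  by (auto simp: sign_def lam_def sorted_wrt_rev sorted_wrt_map intro!: sorted_wrt_mono_rel[OF _ sorted_wrt_upt])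

lemma prec_Cons_self:
  assumes "sorted_wrt (\<ge>) mu" "mu \<noteq> [] \<Longrightarrow> hd mu \<le> a"
  shows "prec mu (a # mu)"
proof -
  have "mu ! i \<le> (a # mu) ! i \<and> (a # mu) ! Suc i \<le> mu ! i" if "i < length mu" for i
    using assms that by (cases i) (auto simp: sorted_wrt_iff_nth_less hd_conv_nth)
  then show ?thesis
    by (simp add: prec_def)
qed

lemma is_edge_epath:
  assumes "mono theta"
  shows "is_edge (epath theta k)"
proof -
  have "prec (lam theta k) (theta k # lam theta k)"
  proof (rule prec_Cons_self)
    show "sorted_wrt (\<ge>) (lam theta k)"
      using lam_in_sign[OF assms] by (simp add: sign_def)
    show "hd (lam theta k) \<le> theta k" if "lam theta k \<noteq> []"
      using that assms unfolding mono_def by (cases k) (auto simp: lam_def)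
  qed
  then show ?thesis
    using lam_in_sign[OF assms] by (simp add: is_edge_def epath_def lam_Suc[symmetric])
qed

lemma epath_in_Omega: "mono theta \<Longrightarrow> epath theta \<in> Omega"
  using is_edge_epath by (simp add: Omega_def epath_def lam_def)

definition epath_prefix :: "(nat \<Rightarrow> int) \<Rightarrow> nat \<Rightarrow> edge list" where
  "epath_prefix theta M = map (epath theta) [0..<M]"

lemma epath_prefix_Suc: "epath_prefix theta (Suc M) = epath_prefix theta M @ [epath theta M]"
  by (simp add: epath_prefix_def)

lemma epath_prefix_append:
  "M \<le> n \<Longrightarrow> epath_prefix theta n = epath_prefix theta M @ map (epath theta) [M..<n]"
  unfolding epath_prefix_def by (metis map_append le_add_diff_inverse upt_add_eq_append zero_le)

lemma epath_prefix_fpaths: "mono theta \<Longrightarrow> 0 < M \<Longrightarrow> epath_prefix theta M \<in> fpaths [] (lam theta M)"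
  using Omega_prefix_fpaths[OF epath_in_Omega] by (simp add: epath_prefix_def epath_def)

lemma epath_segment_fpaths:
  "mono theta \<Longrightarrow> M < n \<Longrightarrow> map (epath theta) [M..<n] \<in> fpaths (lam theta M) (lam theta n)"
  using Omega_segment_fpaths[OF epath_in_Omega] by (simp add: epath_def)

definition excess :: "(nat \<Rightarrow> int) \<Rightarrow> nat \<Rightarrow> int list \<Rightarrow> int" where
  "excess theta M la = sum_list la - sum_list (lam theta M)"

lemma sum_list_tl_le_prec:
  assumes "prec mu la"
  shows "sum_list (tl la) \<le> sum_list mu" "mu \<noteq> tl la \<Longrightarrow> sum_list (tl la) < sum_list mu"
proof -
  have len: "length (tl la) = length mu" and le: "\<And>i. i < length mu \<Longrightarrow> tl la ! i \<le> mu ! i"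
    using assms by (auto simp: prec_def nth_tl)
  show "sum_list (tl la) \<le> sum_list mu"
    unfolding sum_list_sum_nth len by (rule sum_mono) (simp add: le)
  assume "mu \<noteq> tl la"
  then obtain i where "i < length mu" "tl la ! i \<noteq> mu ! i"
    using len by (metis nth_equalityI)
  then show "sum_list (tl la) < sum_list mu"
    using len le by (simp add: sum_list_sum_nth) (intro sum_strict_mono_ex1; force)
qed

lemma wt_eq_wt_epath_excess:
  assumes "q \<noteq> 0" "length la = Suc M"
  shows "wt q (mu, la) = wt q (epath theta M) *
           q powi ((int M + 1) * excess theta M mu - int M * excess theta (Suc M) la)"
proof -
  have "(int M + 1) * sum_list mu - int M * sum_list la =
      ((int M + 1) * sum_list (lam theta M) - int M * sum_list (lam theta (Suc M))) +
      ((int M + 1) * excess theta M mu - int M * excess theta (Suc M) la)"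
    by (simp add: excess_def algebra_simps)
  then show ?thesis
    using assms by (simp add: wt_def epath_def Let_def add.commute power_int_add)
qed

locale eventually_constant_theta =
  fixes q :: real and theta :: "nat \<Rightarrow> int" and K :: nat and c :: int
  assumes q_pos: "0 < q" and q_less_1: "q < 1" and mono_theta: "mono theta"
    and theta_eq_c: "\<And>j. K \<le> j \<Longrightarrow> theta j = c"
begin

lemma theta_le_c: "theta j \<le> c"
  using monoD[OF mono_theta, of j "max j K"] theta_eq_c[of "max j K"] by simp

definition admissible :: "nat \<Rightarrow> int list set" where
  "admissible M = {la \<in> sign M. set la \<subseteq> {theta 0..c} \<and> 0 \<le> excess theta M la}"

lemma finite_admissible: "finite (admissible M)"
  by (rule finite_subset[OF _ finite_lists_length_eq[of "{theta 0..c}" M]])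
    (auto simp: admissible_def sign_def)

lemma lam_admissible: "lam theta M \<in> admissible M"
  using mono_theta theta_le_c lam_in_sign[OF mono_theta]
  by (auto simp: admissible_def excess_def lam_def dest: monoD)

lemma admissible_edge:
  assumes la: "la \<in> admissible (Suc M)" and "K \<le> M" and edge: "is_edge (mu, la)"
  shows "mu \<in> admissible M" "excess theta (Suc M) la \<le> excess theta M mu"
    "mu \<noteq> tl la \<Longrightarrow> excess theta (Suc M) la + 1 \<le> excess theta M mu"
proof -
  have prec: "prec mu la"
    using edge by (simp add: is_edge_def)
  obtain a la' where la_eq: "la = a # la'" and "length mu = M"
    using la prec by (cases la) (auto simp: admissible_def sign_def prec_def)
  have "a \<le> c" and set_la: "set la \<subseteq> {theta 0..c}"
    using la la_eq by (auto simp: admissible_def)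
  have excess_diff: "excess theta M mu - excess theta (Suc M) la = (sum_list mu - sum_list la') + (c - a)"
    using theta_eq_c[OF \<open>K \<le> M\<close>] by (simp add: excess_def la_eq lam_Suc)
  show le: "excess theta (Suc M) la \<le> excess theta M mu"
    using excess_diff sum_list_tl_le_prec(1)[OF prec] \<open>a \<le> c\<close> la_eq by simp
  show "mu \<noteq> tl la \<Longrightarrow> excess theta (Suc M) la + 1 \<le> excess theta M mu"
    using excess_diff sum_list_tl_le_prec(2)[OF prec] \<open>a \<le> c\<close> la_eq by simp
  have "set mu \<subseteq> {theta 0..c}"
  proof
    fix x assume "x \<in> set mu"
    then obtain i where "i < length mu" "x = mu ! i"
      by (auto simp: in_set_conv_nth)
    then have "la ! Suc i \<le> x" "x \<le> la ! i" "la ! i \<in> set la" "la ! Suc i \<in> set la"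
      using prec by (auto simp: prec_def)
    then show "x \<in> {theta 0..c}"
      using set_la by force
  qed
  then show "mu \<in> admissible M"
    using le la edge \<open>length mu = M\<close> by (auto simp: admissible_def is_edge_def)
qed

lemma card_edges_to_admissible:
  assumes "la \<in> admissible (Suc M)"
  shows "card {mu. is_edge (mu, la)} \<le> 2 ^ nat (c - theta 0)"
proof -
  obtain a la' where la_eq: "la = a # la'"
    using assms by (cases la) (auto simp: admissible_def sign_def)
  have "a \<le> c" "theta 0 \<le> last la" "sorted_wrt (\<ge>) la"
    using assms la_eq last_in_set[of la] by (auto simp: admissible_def sign_def)
  have "card {mu. is_edge (mu, la)} \<le> card {mu. prec mu la}"
    using finite_card_prec[of a la'] la_eq by (intro card_mono) (auto simp: is_edge_def)
  also have "\<dots> \<le> 2 ^ nat (a - last la)"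
    using finite_card_prec[of a la'] \<open>sorted_wrt (\<ge>) la\<close> la_eq by simp
  also have "\<dots> \<le> 2 ^ nat (c - theta 0)"
    using \<open>a \<le> c\<close> \<open>theta 0 \<le> last la\<close> by (intro power_increasing) auto
  finally show ?thesis .
qed

lemma powi_gap_le:
  assumes "K \<le> M" "0 \<le> T" "T \<le> s" "\<not> b \<Longrightarrow> T + 1 \<le> s"
  shows "q powi ((int M + 2 - int K) * (s - T) + T) \<le> (if b then 1 else q ^ (M - K))"
proof (cases b)
  case True
  have "0 \<le> (int M + 2 - int K) * (s - T) + T"
    using assms(1-3) by simp
  then show ?thesis
    using True q_pos q_less_1 power_int_decreasing[of 0 _ q] by simp
next
  case False
  define g where "g = (int M + 2 - int K) * (s - T)"
  have "int M + 2 - int K \<le> g"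
    unfolding g_def using assms(1) assms(4)[OF False] by simp
  then have "int (M - K) \<le> g + T"
    using assms(1,2) by (simp add: of_nat_diff)
  then show ?thesis
    using False q_pos q_less_1 power_int_decreasing[of "int (M - K)" _ q] by (simp add: g_def)
qed

text \<open>The exponent (1 - K) * excess is what makes the induction on the level close up:
  an edge leaving the distinguished path raises the excess by at least one, which pays for
  the factor q ^ (M - K).\<close>
lemma edge_contribution_le:
  assumes "K \<le> M" "0 \<le> A"
    and IH: "\<forall>mu\<in>admissible M. dimq1 q mu \<le>
               A * path_wt q (epath_prefix theta M) * q powi ((1 - int K) * excess theta M mu)"
    and la: "la \<in> admissible (Suc M)" and edge: "is_edge (mu, la)"
  shows "dimq1 q mu * wt q (mu, la) \<le> A * path_wt q (epath_prefix theta (Suc M)) *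
           q powi ((1 - int K) * excess theta (Suc M) la) * (if mu = tl la then 1 else q ^ (M - K))"
proof -
  define s where "s = excess theta M mu"
  define T where "T = excess theta (Suc M) la"
  let ?W = "A * path_wt q (epath_prefix theta (Suc M))"
  have "0 \<le> T" "T \<le> s" and T_less: "mu \<noteq> tl la \<Longrightarrow> T + 1 \<le> s"
    using la admissible_edge[OF la \<open>K \<le> M\<close> edge] by (auto simp: admissible_def s_def T_def)
  have "length la = Suc M"
    using la by (simp add: admissible_def sign_def)
  have "dimq1 q mu * wt q (mu, la) \<le>
      A * path_wt q (epath_prefix theta M) * q powi ((1 - int K) * s) * wt q (mu, la)"
    using IH admissible_edge(1)[OF la \<open>K \<le> M\<close> edge] path_wt_pos[OF q_pos, of "[(mu, la)]"]
    by (intro mult_right_mono) (auto simp: s_def path_wt_def)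
  also have "\<dots> = A * (path_wt q (epath_prefix theta M) * wt q (epath theta M)) *
      (q powi ((1 - int K) * s) * q powi ((int M + 1) * s - int M * T))"
    using q_pos \<open>length la = Suc M\<close> by (simp add: wt_eq_wt_epath_excess s_def T_def)
  also have "\<dots> = ?W * q powi ((int M + 2 - int K) * (s - T) + T + (1 - int K) * T)"
    using q_pos by (simp add: epath_prefix_Suc path_wt_def power_int_add[symmetric] algebra_simps)
  also have "\<dots> = ?W * q powi ((1 - int K) * T) * q powi ((int M + 2 - int K) * (s - T) + T)"
    using q_pos by (simp add: power_int_add)
  also have "\<dots> \<le> ?W * q powi ((1 - int K) * T) * (if mu = tl la then 1 else q ^ (M - K))"
    using powi_gap_le[OF \<open>K \<le> M\<close> \<open>0 \<le> T\<close> \<open>T \<le> s\<close> T_less] q_pos path_wt_pos[OF q_pos] \<open>0 \<le> A\<close>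
    by (intro mult_left_mono) (simp_all add: less_imp_le)
  finally show ?thesis
    by (simp add: T_def)
qed

lemma dimq1_admissible_step:
  assumes "Suc K \<le> M" "0 \<le> A"
    and IH: "\<forall>mu\<in>admissible M. dimq1 q mu \<le>
               A * path_wt q (epath_prefix theta M) * q powi ((1 - int K) * excess theta M mu)"
    and la: "la \<in> admissible (Suc M)"
  shows "dimq1 q la \<le> A * (1 + 2 ^ nat (c - theta 0) * q ^ (M - K)) *
           path_wt q (epath_prefix theta (Suc M)) * q powi ((1 - int K) * excess theta (Suc M) la)"
proof -
  let ?edges = "{mu. is_edge (mu, la)}"
  let ?B = "A * path_wt q (epath_prefix theta (Suc M)) * q powi ((1 - int K) * excess theta (Suc M) la)"
  have B_nonneg: "0 \<le> ?B"
    using \<open>0 \<le> A\<close> q_pos path_wt_pos[OF q_pos] by (simp add: less_imp_le)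
  have "\<not> is_edge ([], la)"
    using la \<open>Suc K \<le> M\<close> length_edge[of "([], la)"] by (auto simp: admissible_def sign_def)
  then have "dimq1 q la = (\<Sum>mu\<in>?edges. dimq1 q mu * wt q (mu, la))"
    by (simp add: dimq1_def dimq_last_step[of q "[]" la])
  also have "\<dots> \<le> (\<Sum>mu\<in>?edges. ?B * ((if mu = tl la then 1 else 0) + q ^ (M - K)))"
  proof (rule sum_mono)
    fix mu assume "mu \<in> ?edges"
    then have "dimq1 q mu * wt q (mu, la) \<le> ?B * (if mu = tl la then 1 else q ^ (M - K))"
      using edge_contribution_le[OF _ \<open>0 \<le> A\<close> IH la] \<open>Suc K \<le> M\<close> by simp
    also have "\<dots> \<le> ?B * ((if mu = tl la then 1 else 0) + q ^ (M - K))"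
      using B_nonneg q_pos by (intro mult_left_mono) auto
    finally show "dimq1 q mu * wt q (mu, la) \<le> ?B * ((if mu = tl la then 1 else 0) + q ^ (M - K))" .
  qed
  also have "\<dots> = ?B * ((if tl la \<in> ?edges then 1 else 0) + card ?edges * q ^ (M - K))"
    by (simp add: sum_distrib_left[symmetric] sum.distrib finite_edges_to)
  also have "\<dots> \<le> ?B * (1 + 2 ^ nat (c - theta 0) * q ^ (M - K))"
    using card_edges_to_admissible[OF la] q_pos B_nonneg
    by (intro mult_left_mono add_mono mult_right_mono) (simp_all add: less_imp_le flip: of_nat_le_iff)
  finally show ?thesis
    by (simp only: ac_simps)
qed

lemma dimq1_admissible_le:
  assumes "0 \<le> A"
    and bound_Suc_K: "\<forall>la\<in>admissible (Suc K). dimq1 q la \<le>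
      A * path_wt q (epath_prefix theta (Suc K)) * q powi ((1 - int K) * excess theta (Suc K) la)"
    and "Suc K \<le> M"
  shows "\<forall>la\<in>admissible M. dimq1 q la \<le> A * exp (2 ^ nat (c - theta 0) * (\<Sum>i\<in>{1..<M - K}. q ^ i)) *
           path_wt q (epath_prefix theta M) * q powi ((1 - int K) * excess theta M la)"
  using \<open>Suc K \<le> M\<close>
proof (induction M rule: dec_induct)
  case base
  then show ?case
    using bound_Suc_K by simp
next
  case (step M)
  let ?Q = "2 ^ nat (c - theta 0) :: real"
  let ?A = "A * exp (?Q * (\<Sum>i\<in>{1..<M - K}. q ^ i))"
  let ?rest = "\<lambda>la. path_wt q (epath_prefix theta (Suc M)) * q powi ((1 - int K) * excess theta (Suc M) la)"
  have sum_Suc: "(\<Sum>i\<in>{1..<Suc M - K}. q ^ i) = (\<Sum>i\<in>{1..<M - K}. q ^ i) + q ^ (M - K)"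
    using step.hyps by (simp add: Suc_diff_le)
  show ?case
  proof
    fix la assume la: "la \<in> admissible (Suc M)"
    have "dimq1 q la \<le> ?A * (1 + ?Q * q ^ (M - K)) * ?rest la"
      using dimq1_admissible_step[OF step.hyps(1) _ step.IH la] \<open>0 \<le> A\<close> by (simp add: mult.assoc)
    also have "\<dots> \<le> ?A * exp (?Q * q ^ (M - K)) * ?rest la"
      using \<open>0 \<le> A\<close> q_pos path_wt_pos[OF q_pos]
      by (intro mult_right_mono mult_left_mono) (simp_all add: less_imp_le)
    also have "?A * exp (?Q * q ^ (M - K)) = A * exp (?Q * (\<Sum>i\<in>{1..<Suc M - K}. q ^ i))"
      unfolding sum_Suc by (simp add: distrib_left exp_add)
    finally show "dimq1 q la \<le> A * exp (?Q * (\<Sum>i\<in>{1..<Suc M - K}. q ^ i)) *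
        path_wt q (epath_prefix theta (Suc M)) * q powi ((1 - int K) * excess theta (Suc M) la)"
      by (simp only: mult.assoc)
  qed
qed

lemma dimq1_lam_le_path_wt: "\<exists>B. \<forall>n\<ge>Suc K. dimq1 q (lam theta n) \<le> B * path_wt q (epath_prefix theta n)"
proof -
  let ?Q = "2 ^ nat (c - theta 0) :: real"
  let ?w = "\<lambda>la. path_wt q (epath_prefix theta (Suc K)) * q powi ((1 - int K) * excess theta (Suc K) la)"
  define A where "A = (\<Sum>la\<in>admissible (Suc K). dimq1 q la / ?w la)"
  have w_pos: "0 < ?w la" for la
    using q_pos path_wt_pos[OF q_pos] by simp
  have "0 \<le> A"
    unfolding A_def dimq1_def using w_pos dimq_nonneg[OF q_pos] by (simp add: sum_nonneg less_imp_le)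
  have "dimq1 q la \<le> A * ?w la" if "la \<in> admissible (Suc K)" for la
  proof -
    have "dimq1 q la / ?w la \<le> A"
      unfolding A_def using that w_pos dimq_nonneg[OF q_pos] finite_admissible
      by (intro member_le_sum) (simp_all add: dimq1_def less_imp_le)
    then show ?thesis
      using w_pos[of la] by (simp add: pos_divide_le_eq)
  qed
  then have bound: "dimq1 q la \<le> A * exp (?Q * (\<Sum>i\<in>{1..<n - K}. q ^ i)) * path_wt q (epath_prefix theta n) *
      q powi ((1 - int K) * excess theta n la)" if "Suc K \<le> n" "la \<in> admissible n" for n la
    using dimq1_admissible_le[OF \<open>0 \<le> A\<close> _ that(1)] that(2) by (simp add: mult.assoc)
  have "dimq1 q (lam theta n) \<le> A * exp (?Q / (1 - q)) * path_wt q (epath_prefix theta n)"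
    if "Suc K \<le> n" for n
  proof -
    have "(\<Sum>i\<in>{1..<n - K}. q ^ i) \<le> 1 / (1 - q)"
      using geometric_sum_less[OF q_pos q_less_1] by (simp add: less_imp_le)
    then have "?Q * (\<Sum>i\<in>{1..<n - K}. q ^ i) \<le> ?Q * (1 / (1 - q))"
      by (intro mult_left_mono) simp_all
    then have "exp (?Q * (\<Sum>i\<in>{1..<n - K}. q ^ i)) \<le> exp (?Q / (1 - q))"
      by simp
    have "dimq1 q (lam theta n) \<le> A * exp (?Q * (\<Sum>i\<in>{1..<n - K}. q ^ i)) * path_wt q (epath_prefix theta n)"
      using bound[OF that lam_admissible] by (simp add: excess_def)
    also have "\<dots> \<le> A * exp (?Q / (1 - q)) * path_wt q (epath_prefix theta n)"
      using \<open>exp _ \<le> exp _\<close> \<open>0 \<le> A\<close> path_wt_pos[OF q_pos]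
      by (intro mult_right_mono mult_left_mono) (simp_all add: less_imp_le)
    finally show ?thesis .
  qed
  then show ?thesis
    by blast
qed

definition dim_ratio :: "nat \<Rightarrow> real" where
  "dim_ratio n = dimq1 q (lam theta n) / path_wt q (epath_prefix theta n)"

definition max_ratio :: real where
  "max_ratio = (SUP n\<in>{Suc K..}. dim_ratio n)"

lemma dim_ratio_ge_1: "0 < n \<Longrightarrow> 1 \<le> dim_ratio n"
  using path_wt_le_dimq[OF q_pos epath_prefix_fpaths[OF mono_theta]] path_wt_pos[OF q_pos]
  by (simp add: dim_ratio_def dimq1_def)

lemma dim_ratio_le_max_ratio: "Suc K \<le> n \<Longrightarrow> dim_ratio n \<le> max_ratio"
proof -
  obtain B where "\<forall>n\<ge>Suc K. dimq1 q (lam theta n) \<le> B * path_wt q (epath_prefix theta n)"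
    using dimq1_lam_le_path_wt by blast
  then have "bdd_above (dim_ratio ` {Suc K..})"
    using path_wt_pos[OF q_pos] by (intro bdd_aboveI[of _ B]) (auto simp: dim_ratio_def pos_divide_le_eq)
  then show "Suc K \<le> n \<Longrightarrow> dim_ratio n \<le> max_ratio"
    unfolding max_ratio_def by (intro cSUP_upper) auto
qed

lemma max_ratio_pos: "0 < max_ratio"
  using dim_ratio_ge_1[of "Suc K"] dim_ratio_le_max_ratio[of "Suc K"] by simp

end

lemma space_eq_Omega: "sets P = sets GT_space \<Longrightarrow> space P = Omega"
  using sets_eq_imp_space_eq[of P GT_space] by (simp add: GT_space_def space_measure_of_conv)

lemma sets_eq_sigma_sets_cyl:
  assumes "sets P = sets GT_space"
  shows "sets P = sigma_sets Omega {cyl al | al la. al \<in> fpaths [] la}"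
proof -
  have "{cyl al | al la. al \<in> fpaths [] la} \<subseteq> Pow Omega"
    by (auto simp: cyl_def)
  then show ?thesis
    using assms by (simp add: GT_space_def sets_measure_of)
qed

lemma cyl_prefix_in_sets:
  assumes "sets P = sets GT_space" "om \<in> Omega"
  shows "cyl (map om [0..<M]) \<in> sets P"
proof (cases M)
  case 0
  then show ?thesis
    using sets.top[of P] space_eq_Omega[OF assms(1)] by (simp add: cyl_def)
next
  case (Suc M')
  then show ?thesis
    using Omega_prefix_fpaths[OF assms(2), of M] sets_eq_sigma_sets_cyl[OF assms(1)]
    by (auto intro: sigma_sets.Basic)
qed

lemma Inter_cyl_prefix:
  assumes "om \<in> Omega"
  shows "(\<Inter>M. cyl (map om [0..<M])) = {om}"
proof (intro equalityI subsetI)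
  fix om' assume "om' \<in> (\<Inter>M. cyl (map om [0..<M]))"
  then have "om' \<in> cyl (map om [0..<Suc i])" for i
    by blast
  then have "om' i = om i" for i
    by (simp add: cyl_def del: upt_Suc) (meson lessI)
  then show "om' \<in> {om}"
    by auto
qed (use assms in \<open>auto simp: cyl_def\<close>)

lemma singleton_in_sets:
  assumes "sets P = sets GT_space" "om \<in> Omega"
  shows "{om} \<in> sets P"
proof -
  have "(\<Inter>M. cyl (map om [0..<M])) \<in> sets P"
    using cyl_prefix_in_sets[OF assms] by (intro sets.countable_INT') auto
  then show ?thesis
    by (simp add: Inter_cyl_prefix[OF assms(2)])
qed

lemma measure_cyl_prefix_tendsto:
  assumes "finite_measure P" "sets P = sets GT_space" "om \<in> Omega"
  shows "(\<lambda>M. measure P (cyl (map om [0..<M]))) \<longlonglongrightarrow> measure P {om}"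
proof -
  have "range (\<lambda>M. cyl (map om [0..<M])) \<subseteq> sets P"
    using cyl_prefix_in_sets[OF assms(2,3)] by auto
  have "decseq (\<lambda>M. cyl (map om [0..<M]))"
    by (auto simp: decseq_def cyl_def)
  then show ?thesis
    using finite_measure.finite_Lim_measure_decseq[OF assms(1) \<open>range _ \<subseteq> sets P\<close>]
    by (simp add: Inter_cyl_prefix[OF assms(3)])
qed

lemma q_central_cyl_cross:
  assumes "q_central q P" "0 < q" "al \<in> fpaths [] la" "be \<in> fpaths [] la"
  shows "path_wt q be * measure P (cyl al) = path_wt q al * measure P (cyl be)"
proof -
  have "la \<in> sign (length al)" "1 \<le> length al"
    using sign_of_fpaths_from_Nil[OF assms(3)] assms(3) by (auto simp: Suc_le_eq)
  then have "measure P (cyl x) / path_wt q x = measure P (ends (length al) la) / dimq1 q la"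
    if "x \<in> fpaths [] la" for x
    using assms(1) that unfolding q_central_def by blast
  then have "measure P (cyl al) / path_wt q al = measure P (cyl be) / path_wt q be"
    using assms(3,4) by simp
  then show ?thesis
    using path_wt_pos[OF \<open>0 < q\<close>, of al] path_wt_pos[OF \<open>0 < q\<close>, of be]
    by (simp add: field_simps)
qed

lemma q_central_measure_replace_prefix:
  assumes "q_central q P" "finite_measure P" "sets P = sets GT_space" "0 < q"
    and om: "om \<in> Omega" and al: "al \<in> fpaths [] la" and be: "map om [0..<length al] \<in> fpaths [] la"
  shows "path_wt q (map om [0..<length al]) * measure P {replace_prefix al om} = path_wt q al * measure P {om}"
proof -
  let ?N = "length al"
  let ?be = "map om [0..<?N]"
  let ?seg = "\<lambda>M. map om [?N..<M]"
  have "fst (om ?N) = la"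
    using al snd_prefix_fpaths[OF be] Omega_fst_Suc[OF om, of "?N - 1"] by (cases al) auto
  have om': "replace_prefix al om \<in> Omega"
    by (rule replace_prefix_in_Omega[OF al om be])
  have "path_wt q ?be * measure P (cyl (map (replace_prefix al om) [0..<M])) =
      path_wt q al * measure P (cyl (map om [0..<M]))" if "?N < M" for M
  proof -
    have seg: "?seg M \<in> fpaths la (snd (om (M - 1)))"
      using Omega_segment_fpaths[OF om that] \<open>fst (om ?N) = la\<close> by simp
    have "map om [0..<M] = ?be @ ?seg M"
      using upt_add_eq_append[of 0 ?N "M - ?N"] that by simp
    moreover have "map (replace_prefix al om) [0..<M] = al @ ?seg M"
      using that by (simp add: map_replace_prefix)
    ultimately show ?thesis
      using q_central_cyl_cross[OF assms(1,4) fpaths_append[OF al seg] fpaths_append[OF be seg]]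
        path_wt_pos[OF \<open>0 < q\<close>, of "?seg M"] by (simp add: ac_simps)
  qed
  then have "\<forall>\<^sub>F M in sequentially. path_wt q al * measure P (cyl (map om [0..<M])) =
      path_wt q ?be * measure P (cyl (map (replace_prefix al om) [0..<M]))"
    by (auto simp: eventually_sequentially intro!: exI[of _ "Suc ?N"])
  then have "(\<lambda>M. path_wt q ?be * measure P (cyl (map (replace_prefix al om) [0..<M])))
      \<longlonglongrightarrow> path_wt q al * measure P {om}"
    using tendsto_mult_left[OF measure_cyl_prefix_tendsto[OF assms(2,3) om]] by (rule Lim_transform_eventually[rotated])
  moreover have "(\<lambda>M. path_wt q ?be * measure P (cyl (map (replace_prefix al om) [0..<M])))
      \<longlonglongrightarrow> path_wt q ?be * measure P {replace_prefix al om}"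
    using measure_cyl_prefix_tendsto[OF assms(2,3) om'] by (rule tendsto_mult_left)
  ultimately show ?thesis
    using LIMSEQ_unique by blast
qed

lemma SymN_preserves_Omega_and_tail:
  assumes "f \<in> SymN N"
  shows "\<forall>om\<in>Omega. f om \<in> Omega" "\<forall>om i. N \<le> i \<longrightarrow> f om i = om i"
  using assms
proof (induction rule: SymN.induct)
  case (SymN_gen f la g0)
  have "gen N la g0 om \<in> Omega" if om: "om \<in> Omega" for om
  proof (cases "map om [0..<N] \<in> fpaths [] la")
    case True
    let ?al = "g0 (map om [0..<N])"
    have al: "?al \<in> fpaths [] la"
      using True SymN_gen.hyps(3) by (auto simp: bij_betw_def)
    moreover have "length ?al = N"
      using length_fpaths[OF al] SymN_gen.hyps(2) by (simp add: sign_def)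
    ultimately show ?thesis
      using replace_prefix_in_Omega[OF al om] True
      by (simp add: gen_def replace_prefix_def[abs_def])
  qed (use om in \<open>simp add: gen_def\<close>)
  then show "\<forall>om\<in>Omega. (gen N la g0 \<circ> f) om \<in> Omega" "\<forall>om i. N \<le> i \<longrightarrow> (gen N la g0 \<circ> f) om i = om i"
    using SymN_gen.IH by (auto simp: gen_def)
qed simp_all

lemma Sym_orbit_subset:
  assumes "g \<in> Sym" "om \<in> Omega"
  shows "g om \<in> Omega" "g om \<in> range (\<lambda>al. replace_prefix al om)"
proof -
  obtain N where "g \<in> SymN N"
    using assms(1) by (auto simp: Sym_def)
  then show "g om \<in> Omega"
    using SymN_preserves_Omega_and_tail(1) assms(2) by blast
  have "g om = replace_prefix (map (g om) [0..<N]) om"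
    using SymN_preserves_Omega_and_tail(2)[OF \<open>g \<in> SymN N\<close>] by (auto simp: replace_prefix_def fun_eq_iff)
  then show "g om \<in> range (\<lambda>al. replace_prefix al om)"
    by blast
qed

lemma replace_prefix_in_orbit:
  assumes "la \<in> sign N" "al \<in> fpaths [] la" "map om [0..<N] \<in> fpaths [] la"
  shows "\<exists>g\<in>Sym. g om = replace_prefix al om"
proof -
  define be where "be = map om [0..<N]"
  define swap where "swap = (\<lambda>x. if x = be then al else if x = al then be else x)"
  have "swap (swap x) = x" for x
    by (simp add: swap_def)
  moreover have "swap ` fpaths [] la \<subseteq> fpaths [] la"
    using assms(2,3) by (auto simp: swap_def be_def)
  ultimately have "bij_betw swap (fpaths [] la) (fpaths [] la)"
    by (intro bij_betw_byWitness[where f' = swap]) auto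
  then have "gen N la swap \<in> Sym"
    using SymN_gen[OF SymN_id assms(1)] unfolding Sym_def by auto
  moreover have "length al = N"
    using length_fpaths[OF assms(2)] assms(1) by (simp add: sign_def)
  then have "gen N la swap om = replace_prefix al om"
    using assms(3) by (simp add: gen_def replace_prefix_def[abs_def] swap_def be_def[symmetric])
  ultimately show ?thesis
    by blast
qed

lemma orbit_in_sets:
  assumes "sets P = sets GT_space" "om \<in> Omega"
  shows "(\<Union>g\<in>Sym. {g om}) \<in> sets P"
proof (rule sets.countable)
  have "(\<Union>g\<in>Sym. {g om}) \<subseteq> range (\<lambda>al. replace_prefix al om)"
    using Sym_orbit_subset(2)[OF _ assms(2)] by blast
  then show "countable (\<Union>g\<in>Sym. {g om})"
    by (rule countable_subset) simp
  fix x assume "x \<in> (\<Union>g\<in>Sym. {g om})"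
  then have "x \<in> Omega"
    using Sym_orbit_subset(1)[OF _ assms(2)] by blast
  then show "{x} \<in> sets P"
    by (rule singleton_in_sets[OF assms(1)])
qed

lemma dimq1_mult_measure_le_orbit:
  assumes "q_central q P" "finite_measure P" "sets P = sets GT_space" "0 < q"
    and om: "om \<in> Omega" and be: "map om [0..<N] \<in> fpaths [] la"
  shows "dimq1 q la * measure P {om} \<le> path_wt q (map om [0..<N]) * measure P (\<Union>g\<in>Sym. {g om})"
proof -
  let ?be = "map om [0..<N]"
  let ?rp = "\<lambda>al. replace_prefix al om"
  have len: "length al = N" if "al \<in> fpaths [] la" for al
    using length_fpaths[OF that] length_fpaths[OF be] by simp
  have mass: "path_wt q ?be * measure P {?rp al} = path_wt q al * measure P {om}" if "al \<in> fpaths [] la" for al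
    using q_central_measure_replace_prefix[OF assms(1-4) om that] be len[OF that] by simp
  have in_Omega: "?rp al \<in> Omega" if "al \<in> fpaths [] la" for al
    using replace_prefix_in_Omega[OF that om] be len[OF that] by simp
  have "inj_on ?rp (fpaths [] la)"
    by (rule inj_on_inverseI[where g = "\<lambda>om'. map om' [0..<N]"]) (simp add: map_replace_prefix len)
  then have "(\<Sum>al\<in>fpaths [] la. measure P {?rp al}) = (\<Sum>x\<in>?rp ` fpaths [] la. measure P {x})"
    by (simp add: sum.reindex)
  also have "\<dots> = measure P (?rp ` fpaths [] la)"
    using in_Omega singleton_in_sets[OF assms(3)]
    by (intro finite_measure.finite_measure_eq_sum_singleton[OF assms(2), symmetric]) (auto simp: finite_fpaths)
  also have "\<dots> \<le> measure P (\<Union>g\<in>Sym. {g om})"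
    using replace_prefix_in_orbit[OF sign_of_fpaths_from_Nil[OF be, simplified] _ be]
    by (intro finite_measure.finite_measure_mono[OF assms(2) _ orbit_in_sets[OF assms(3) om]])
      (auto dest!: sym[of _ "replace_prefix _ om"])
  finally have "path_wt q ?be * (\<Sum>al\<in>fpaths [] la. measure P {?rp al}) \<le>
      path_wt q ?be * measure P (\<Union>g\<in>Sym. {g om})"
    using path_wt_pos[OF \<open>0 < q\<close>, of ?be] by simp
  then show ?thesis
    by (simp add: sum_distrib_left mass dimq1_def dimq_def sum_distrib_right)
qed

locale P_theta = eventually_constant_theta +
  fixes P :: "(nat \<Rightarrow> edge) measure"
  assumes is_P: "is_P_theta q theta P"
begin

lemma prob_space_P: "prob_space P" and sets_P: "sets P = sets GT_space" and q_central_P: "q_central q P"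
  using is_P by (simp_all add: is_P_theta_def)

lemma finite_measure_P: "finite_measure P"
  using prob_space_P by (simp add: prob_space_def)

lemma measure_cyl_epath_prefix_ge:
  assumes "0 < M"
  shows "1 / max_ratio \<le> measure P (cyl (epath_prefix theta M))"
proof -
  let ?w = "path_wt q (epath_prefix theta M)"
  have "measure P (cyl (epath_prefix theta M)) / ?w = measure P (ends M (lam theta M)) / dimq1 q (lam theta M)"
    using q_central_P[unfolded q_central_def, rule_format, of M "lam theta M" "epath_prefix theta M"]
      assms epath_prefix_fpaths[OF mono_theta assms] lam_in_sign[OF mono_theta] by simp
  then have eq: "measure P (cyl (epath_prefix theta M)) =
      ?w * (measure P (ends M (lam theta M)) / dimq1 q (lam theta M))"
    using path_wt_pos[OF q_pos, of "epath_prefix theta M"] by (simp add: field_simps)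
  have lim: "(\<lambda>n. ?w * (dimq q (lam theta M) (lam theta n) / dimq1 q (lam theta n)))
      \<longlonglongrightarrow> measure P (cyl (epath_prefix theta M))"
    unfolding eq using is_P assms lam_in_sign[OF mono_theta]
    by (intro tendsto_mult_left) (simp add: is_P_theta_def Suc_le_eq)
  have "1 / max_ratio \<le> ?w * (dimq q (lam theta M) (lam theta n) / dimq1 q (lam theta n))"
    if "max (Suc M) (Suc K) \<le> n" for n
  proof -
    have "path_wt q (epath_prefix theta n) \<le> ?w * dimq q (lam theta M) (lam theta n)"
      using epath_prefix_append[of M n] path_wt_le_dimq[OF q_pos epath_segment_fpaths[OF mono_theta]]
        path_wt_pos[OF q_pos, of "epath_prefix theta M"] that
      by (simp add: mult_left_mono less_imp_le)
    have "1 / max_ratio \<le> 1 / dim_ratio n"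
      using dim_ratio_le_max_ratio[of n] dim_ratio_ge_1[of n] that by (simp add: frac_le)
    also have "\<dots> = path_wt q (epath_prefix theta n) / dimq1 q (lam theta n)"
      by (simp add: dim_ratio_def)
    also have "\<dots> \<le> ?w * dimq q (lam theta M) (lam theta n) / dimq1 q (lam theta n)"
      using \<open>path_wt q (epath_prefix theta n) \<le> _\<close> dimq_nonneg[OF q_pos]
      by (simp add: dimq1_def divide_right_mono)
    finally show ?thesis
      by simp
  qed
  then show ?thesis
    by (intro LIMSEQ_le_const[OF lim]) auto
qed

lemma measure_epath_ge: "1 / max_ratio \<le> measure P {epath theta}"
  using measure_cyl_prefix_tendsto[OF finite_measure_P sets_P epath_in_Omega[OF mono_theta]]
    measure_cyl_epath_prefix_ge
  by (intro LIMSEQ_le_const) (auto simp: epath_prefix_def intro!: exI[of _ 1])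

lemma measure_orbit_epath: "measure P (\<Union>g\<in>Sym. {g (epath theta)}) = 1"
proof -
  let ?orbit = "\<Union>g\<in>Sym. {g (epath theta)}"
  have "dim_ratio n \<le> max_ratio * measure P ?orbit" if "Suc K \<le> n" for n
  proof -
    have "dimq1 q (lam theta n) * measure P {epath theta} \<le> path_wt q (epath_prefix theta n) * measure P ?orbit"
      using dimq1_mult_measure_le_orbit[OF q_central_P finite_measure_P sets_P q_pos epath_in_Omega[OF mono_theta]]
        epath_prefix_fpaths[OF mono_theta, of n] that by (simp add: epath_prefix_def)
    then have "dim_ratio n * measure P {epath theta} \<le> measure P ?orbit"
      using path_wt_pos[OF q_pos] by (simp add: dim_ratio_def field_simps)
    moreover have "dim_ratio n * (1 / max_ratio) \<le> dim_ratio n * measure P {epath theta}"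
      using measure_epath_ge dim_ratio_ge_1[of n] that by (intro mult_left_mono) auto
    ultimately have "dim_ratio n * (1 / max_ratio) \<le> measure P ?orbit"
      by linarith
    then show ?thesis
      using max_ratio_pos by (simp add: field_simps)
  qed
  then have "max_ratio \<le> max_ratio * measure P ?orbit"
    unfolding max_ratio_def by (intro cSUP_least) auto
  then have "1 \<le> measure P ?orbit"
    using max_ratio_pos by simp
  then show ?thesis
    using prob_space.prob_le_1[OF prob_space_P] by (simp add: antisym)
qed

end

lemma mono_bounded_eventually_const:
  fixes theta :: "nat \<Rightarrow> int"
  assumes "mono theta" and "\<exists>B. \<forall>k. \<bar>theta k\<bar> \<le> B"
  shows "\<exists>K c. \<forall>j\<ge>K. theta j = c"
proof -
  obtain B where B: "\<And>k. \<bar>theta k\<bar> \<le> B"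
    using assms(2) by blast
  have "theta k \<in> {-B..B}" for k
    using B[of k] by (simp add: abs_le_iff)
  then have "range theta \<subseteq> {-B..B}"
    by blast
  then have "finite (range theta)"
    by (rule finite_subset) simp
  then have "Max (range theta) \<in> range theta"
    by (intro Max_in) auto
  then obtain K where K: "Max (range theta) = theta K"
    by blast
  have "theta j = theta K" if "K \<le> j" for j
  proof (rule order_antisym)
    show "theta j \<le> theta K"
      unfolding K[symmetric] using \<open>finite (range theta)\<close> by (rule Max_ge) simp
    show "theta K \<le> theta j"
      using assms(1) that by (rule monoD)
  qed
  then show ?thesis
    by blast
qed

theorem lemma4p2:
  fixes q :: real and theta :: "nat \<Rightarrow> int" and P :: "(nat \<Rightarrow> edge) measure"
  assumes "0 < q" and "q < 1"
    and "mono theta"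
    and "\<exists>B. \<forall>k. \<bar>theta k\<bar> \<le> B"
    and "is_P_theta q theta P"
  shows "measure P {epath theta} > 0 \<and>
         measure P (\<Union>g\<in>Sym. {g (epath theta)}) = 1"
proof -
  obtain K c where "\<forall>j\<ge>K. theta j = c"
    using mono_bounded_eventually_const[OF assms(3,4)] by blast
  then interpret P_theta q theta K c P
    using assms by unfold_locales auto
  have "0 < 1 / max_ratio"
    using max_ratio_pos by simp
  then show ?thesis
    using measure_epath_ge measure_orbit_epath by linarith
qed

end
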